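(* Let $S,T\subseteq\mathbb{Z}_{>0}$ be finite. Then $|T\triangleleft S|=|S|$ if and only if $T\preceq S$.
   Context: For a finite set $S\subseteq\mathbb{Z}_{>0}$, $S(i)$ denotes its $i$th smallest element. $T\preceq S$ means $|T|\ge|S|$ and $T(i)<S(i)$ for all $i\in[|S|]$. For finite $S,T$, $T\triangleleft S$ is computed by going through $S$ from largest to smallest; each $s$ picks the largest element of $T$ less than $s$ not yet picked (if one exists); $T\triangleleft S$ is the set of picked elements. *)

theory Defs
  imports Main
begin

definition nth_elem :: "nat set \<Rightarrow> nat \<Rightarrow> nat" where
  "nth_elem S i = sorted_list_of_set S ! (i - 1)"

definition dominated :: "nat set \<Rightarrow> nat set \<Rightarrow> bool" where
  "dominated T S \<longleftrightarrow> card T \<ge> card S \<and> (\<forall>i\<in>{1..card S}. nth_elem T i < nth_elem S i)"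

fun pick :: "nat list \<Rightarrow> nat set \<Rightarrow> nat set" where
  "pick [] A = {}"
| "pick (s # ss) A =
     (if \<exists>t\<in>A. t < s
      then (let t = Max {t\<in>A. t < s} in insert t (pick ss (A - {t})))
      else pick ss A)"

definition tri :: "nat set \<Rightarrow> nat set \<Rightarrow> nat set" where
  "tri T S = pick (rev (sorted_list_of_set S)) T"

end

theory Submission
  imports Defs
begin

(* T \<triangleleft> S is a greedy matching of elements of S to smaller elements of T, and it
   matches all of S exactly when a Hall-type condition holds: for each s in S, at least as many
   elements of T lie below s as elements of S lie at or below s. This is proved by induction
   from the top of S: the largest s takes the largest t0 < s, and removing s and t0 preserves
   the condition in both directions, since a remaining s' either lies at or below t0, where
   nothing below s' was removed, or above t0, where s' sees the same elements of T as s.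
   At the k-th element of S the condition reads k \<le> #{t \<in> T. t < S(k)}, i.e. T(k) < S(k). *)

lemma strict_mono_on_nth_elem:
  assumes "finite S"
  shows "strict_mono_on {1..card S} (nth_elem S)"
proof (rule strict_mono_onI)
  fix i j assume "i \<in> {1..card S}" "j \<in> {1..card S}" "i < j"
  then show "nth_elem S i < nth_elem S j"
    using sorted_wrt_nth_less[OF strict_sorted_list_of_set[of S], of "i - 1" "j - 1"] assms
    by (simp add: nth_elem_def)
qed

lemma bij_betw_nth_elem:
  assumes "finite S"
  shows "bij_betw (nth_elem S) {1..card S} S"
proof (rule bij_betw_imageI)
  show "inj_on (nth_elem S) {1..card S}"
    using assms strict_mono_on_imp_inj_on strict_mono_on_nth_elem by blast
  have "{1..card S} = Suc ` {..<card S}"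
    by (simp add: atLeastLessThanSuc_atLeastAtMost[symmetric] lessThan_atLeast0)
  moreover have "(!) (sorted_list_of_set S) ` {..<card S} = S"
    using assms
    by (metis atLeast_upt length_sorted_list_of_set set_map map_nth set_sorted_list_of_set)
  ultimately show "nth_elem S ` {1..card S} = S"
    by (simp add: image_image nth_elem_def)
qed

lemma card_filter_eq_card_indices:
  assumes "finite S"
  shows "card {x\<in>S. P x} = card {i\<in>{1..card S}. P (nth_elem S i)}"
proof -
  have "bij_betw (nth_elem S) {i\<in>{1..card S}. P (nth_elem S i)} {x\<in>S. P x}"
    using bij_betw_nth_elem[OF assms] by (rule bij_betw_Collect) simp
  then show ?thesis
    by (simp add: bij_betw_same_card)
qed

lemma card_le_nth_elem:
  assumes "finite S" "k \<in> {1..card S}"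
  shows "card {x\<in>S. x \<le> nth_elem S k} = k"
proof -
  have "{i\<in>{1..card S}. nth_elem S i \<le> nth_elem S k} = {1..k}"
    using assms strict_mono_on_less_eq[OF strict_mono_on_nth_elem[OF assms(1)]] by auto
  then show ?thesis
    using card_filter_eq_card_indices[OF assms(1)] by simp
qed

lemma le_card_less_iff_nth_elem:
  assumes "finite T" "1 \<le> k"
  shows "k \<le> card {t\<in>T. t < v} \<longleftrightarrow> k \<le> card T \<and> nth_elem T k < v"
proof -
  define I where "I = {i\<in>{1..card T}. nth_elem T i < v}"
  have card_I: "card {t\<in>T. t < v} = card I"
    unfolding I_def using card_filter_eq_card_indices[OF assms(1)] .
  have mono: "strict_mono_on {1..card T} (nth_elem T)"
    using strict_mono_on_nth_elem[OF assms(1)] .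
  show ?thesis
  proof (cases "k \<in> I")
    case True
    then have "{1..k} \<subseteq> I"
      unfolding I_def using strict_mono_on_leD[OF mono] by fastforce
    then have "k \<le> card I"
      using card_mono[of I "{1..k}"] by (simp add: I_def)
    with True show ?thesis
      by (simp add: I_def card_I)
  next
    case False
    have "I \<subseteq> {1..<k}"
    proof
      fix i assume i: "i \<in> I"
      have "i < k" if "k \<le> card T"
        using i False that assms(2) strict_mono_on_leD[OF mono, of k i]
        unfolding I_def by (metis atLeastAtMost_iff mem_Collect_eq not_le order.strict_trans2)
      then show "i \<in> {1..<k}"
        using i unfolding I_def by (cases "k \<le> card T") auto
    qed
    then have "card I < k"
      using card_mono[of "{1..<k}" I] assms(2) by simp
    with False assms(2) show ?thesis
      by (simp add: I_def card_I)
  qed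
qed

definition hall_condition :: "nat set \<Rightarrow> nat set \<Rightarrow> bool" where
  "hall_condition T S \<longleftrightarrow> (\<forall>s\<in>S. card {x\<in>S. x \<le> s} \<le> card {t\<in>T. t < s})"

lemma hall_condition_iff_dominated:
  assumes "finite S" "finite T"
  shows "hall_condition T S \<longleftrightarrow> dominated T S"
proof -
  have ball_image: "(\<forall>b\<in>B. Q b) \<longleftrightarrow> (\<forall>a\<in>A. Q (f a))" if "f ` A = B" for f A B Q
    using that by blast
  have "hall_condition T S \<longleftrightarrow> (\<forall>k\<in>{1..card S}. k \<le> card {t\<in>T. t < nth_elem S k})"
    unfolding hall_condition_def
    using ball_image[OF bij_betw_imp_surj_on[OF bij_betw_nth_elem[OF assms(1)]]]
      card_le_nth_elem[OF assms(1)]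
    by simp
  also have "\<dots> \<longleftrightarrow> (\<forall>k\<in>{1..card S}. k \<le> card T \<and> nth_elem T k < nth_elem S k)"
    using le_card_less_iff_nth_elem[OF assms(2)] by simp
  also have "\<dots> \<longleftrightarrow> dominated T S"
    unfolding dominated_def by (cases "card S = 0") (auto intro: order_trans)
  finally show ?thesis .
qed

lemma finite_pick: "finite (pick ss A)"
  by (induction ss arbitrary: A) (simp_all add: Let_def)

lemma card_pick_le_length: "card (pick ss A) \<le> length ss"
proof (induction ss arbitrary: A)
  case (Cons s ss)
  then show ?case
    using finite_pick by (simp add: Let_def card_insert_if le_SucI)
qed simp

lemma pick_subset: "finite A \<Longrightarrow> pick ss A \<subseteq> A"
proof (induction ss arbitrary: A)
  case (Cons s ss)
  then show ?case
    using Max_in[of "{t\<in>A. t < s}"] by (auto simp: Let_def)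
qed simp

lemma hall_condition_imp_card_le:
  assumes "hall_condition T S" "finite S" "\<forall>x\<in>S. x < s"
  shows "card S \<le> card {t\<in>T. t < s}"
proof (cases "S = {}")
  case False
  define m where "m = Max S"
  have m: "m \<in> S" "m < s"
    using False assms(2,3) by (auto simp: m_def)
  have "{x\<in>S. x \<le> m} = S"
    using assms(2) by (auto simp: m_def)
  moreover have "card {x\<in>S. x \<le> m} \<le> card {t\<in>T. t < m}"
    using assms(1) m(1) unfolding hall_condition_def by blast
  moreover have "card {t\<in>T. t < m} \<le> card {t\<in>T. t < s}"
    using m(2) by (intro card_mono) (auto intro: finite_subset[of _ "{..<s}"])
  ultimately show ?thesis
    by simp
qed simp

lemma card_le_insert_greatest:
  fixes S :: "'a::linorder set"
  assumes "finite S" "\<forall>x\<in>S. x < s"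
  shows "card {x\<in>insert s S. x \<le> s} = Suc (card S)"
proof -
  have "{x\<in>insert s S. x \<le> s} = insert s S"
    using assms(2) by auto
  then show ?thesis
    using assms by auto
qed

lemma card_less_remove:
  fixes T :: "'a::order set"
  assumes "finite T" "t0 \<in> T" "t0 < s"
  shows "card {t\<in>T. t < s} = Suc (card {t\<in>T - {t0}. t < s})"
proof -
  have "{t\<in>T. t < s} = insert t0 {t\<in>T - {t0}. t < s}"
    using assms(2,3) by auto
  then show ?thesis
    using assms(1) by simp
qed

lemma hall_condition_remove_greatest:
  assumes "hall_condition T (insert s S)"
    and "finite S" "finite T" "\<forall>x\<in>S. x < s"
    and "t0 \<in> T" "t0 < s" "\<forall>t\<in>T. t < s \<longrightarrow> t \<le> t0"
  shows "hall_condition (T - {t0}) S"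
  unfolding hall_condition_def
proof
  fix y assume y: "y \<in> S"
  have "y < s"
    using assms(4) y by blast
  then have "{x\<in>insert s S. x \<le> y} = {x\<in>S. x \<le> y}"
    by auto
  moreover have "card {x\<in>insert s S. x \<le> y} \<le> card {t\<in>T. t < y}"
    using assms(1) y unfolding hall_condition_def by blast
  ultimately have hall_y: "card {x\<in>S. x \<le> y} \<le> card {t\<in>T. t < y}"
    by simp
  show "card {x\<in>S. x \<le> y} \<le> card {t\<in>T - {t0}. t < y}"
  proof (cases "y \<le> t0")
    case True
    then have "{t\<in>T - {t0}. t < y} = {t\<in>T. t < y}"
      by auto
    with hall_y show ?thesis
      by simp
  next
    case False
    \<comment> \<open>Between t0 and s there is no element of T, so y sees what s sees.\<close>
    then have "{t\<in>T - {t0}. t < y} = {t\<in>T - {t0}. t < s}"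
      using \<open>y < s\<close> assms(7) by (auto simp: not_le)
    moreover have "card {x\<in>insert s S. x \<le> s} \<le> card {t\<in>T. t < s}"
      using assms(1) unfolding hall_condition_def by blast
    ultimately have "card S \<le> card {t\<in>T - {t0}. t < y}"
      using card_le_insert_greatest[OF assms(2,4)] card_less_remove[OF assms(3,5,6)] by simp
    moreover have "card {x\<in>S. x \<le> y} \<le> card S"
      using assms(2) by (intro card_mono) auto
    ultimately show ?thesis
      by linarith
  qed
qed

lemma hall_condition_insert_greatest:
  assumes "hall_condition (T - {t0}) S"
    and "finite S" "finite T" "\<forall>x\<in>S. x < s" "t0 \<in> T" "t0 < s"
  shows "hall_condition T (insert s S)"
  unfolding hall_condition_def
proof
  fix y assume y: "y \<in> insert s S"
  show "card {x\<in>insert s S. x \<le> y} \<le> card {t\<in>T. t < y}"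
  proof (cases "y = s")
    case True
    then show ?thesis
      using hall_condition_imp_card_le[OF assms(1,2,4)]
        card_le_insert_greatest[OF assms(2,4)] card_less_remove[OF assms(3,5,6)]
      by simp
  next
    case False
    then have "y \<in> S" and "y < s"
      using y assms(4) by auto
    then have "{x\<in>insert s S. x \<le> y} = {x\<in>S. x \<le> y}"
      by auto
    moreover have "card {x\<in>S. x \<le> y} \<le> card {t\<in>T - {t0}. t < y}"
      using assms(1) \<open>y \<in> S\<close> unfolding hall_condition_def by blast
    moreover have "card {t\<in>T - {t0}. t < y} \<le> card {t\<in>T. t < y}"
      using assms(3) by (intro card_mono) auto
    ultimately show ?thesis
      by simp
  qed
qed

lemma card_pick_eq_length_iff:
  assumes "sorted_wrt (>) ss" "finite T"
  shows "card (pick ss T) = length ss \<longleftrightarrow> hall_condition T (set ss)"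
  using assms
proof (induction ss arbitrary: T)
  case Nil
  then show ?case
    by (simp add: hall_condition_def)
next
  case (Cons s ss)
  have below: "\<forall>x\<in>set ss. x < s" and sorted: "sorted_wrt (>) ss"
    using Cons.prems(1) by auto
  show ?case
  proof (cases "\<exists>t\<in>T. t < s")
    case False
    then have "card (pick (s # ss) T) \<noteq> length (s # ss)"
      using card_pick_le_length[of ss T] by simp
    moreover have "\<not> hall_condition T (set (s # ss))"
    proof -
      have "{t\<in>T. t < s} = {}"
        using False by auto
      moreover have "card {x\<in>set (s # ss). x \<le> s} > 0"
        by (auto simp: card_gt_0_iff)
      ultimately show ?thesis
        unfolding hall_condition_def by (metis card.empty list.set_intros(1) not_le)
    qed
    ultimately show ?thesis
      by blast
  next
    case True
    define t0 where "t0 = Max {t\<in>T. t < s}"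
    have "t0 \<in> {t\<in>T. t < s}"
      unfolding t0_def using True Cons.prems(2) by (intro Max_in) auto
    then have t0: "t0 \<in> T" "t0 < s"
      by auto
    have t0_greatest: "\<forall>t\<in>T. t < s \<longrightarrow> t \<le> t0"
      using Cons.prems(2) by (simp add: t0_def)
    have "pick (s # ss) T = insert t0 (pick ss (T - {t0}))"
      using True by (simp add: t0_def Let_def)
    moreover have "t0 \<notin> pick ss (T - {t0})"
      using pick_subset[of "T - {t0}" ss] Cons.prems(2) by blast
    ultimately have "card (pick (s # ss) T) = Suc (card (pick ss (T - {t0})))"
      by (simp add: finite_pick)
    then show ?thesis
      using Cons.IH[OF sorted] Cons.prems(2)
        hall_condition_remove_greatest[OF _ _ Cons.prems(2) below t0 t0_greatest]
        hall_condition_insert_greatest[OF _ _ Cons.prems(2) below t0]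
      by auto
  qed
qed

theorem lemma4p7:
  fixes S T :: "nat set"
  assumes "finite S" and "finite T"
    and "\<forall>x\<in>S. 0 < x" and "\<forall>x\<in>T. 0 < x"
  shows "card (tri T S) = card S \<longleftrightarrow> dominated T S"
proof -
  have "sorted_wrt (>) (rev (sorted_list_of_set S))"
    by (simp add: sorted_wrt_rev)
  from card_pick_eq_length_iff[OF this assms(2)] show ?thesis
    using assms(1,2) hall_condition_iff_dominated by (simp add: tri_def)
qed

end
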